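(* Let $a,b,c,d\ge 0$ be integers with $a+b=c+d=n\ge 1$, and let $\underline x=(a,b)$ and $\underline y=(c,d)$. Then the meander permutation $\sigma_{\underline x,\underline y}$ sends each $i\in\{1,\ldots,n\}$ to the unique element of $\{1,\ldots,n\}$ congruent to $i+a-c$ modulo $n$.
   Context: For compositions $\underline x=(a_1,\ldots,a_m)$, $\underline y=(b_1,\ldots,b_t)$ of $n$ (sequences of nonnegative integers summing to $n$), define bijections $t,b$ of $\{1,\ldots,n\}$ as follows. For each part $a_k$ with $s=a_1+\cdots+a_{k-1}$, set $t(s+j)=s+a_k+1-j$ for $1\le j\le a_k$. Similarly, for each part $b_k$ of $\underline y$ with $s=b_1+\cdots+b_{k-1}$, set $b(s+j)=s+b_k+1-j$ for $1\le j\le b_k$. (These are the top and bottom bijections of the modified meander graph: each vertex is sent to the other endpoint of its top, resp. bottom, arc and fixed if it has none.) The meander permutation is $\sigma_{\underline x,\underline y}=t\circ b$. *)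

theory Defs
  imports "HOL-Number_Theory.Cong"
begin

fun part_rev :: "nat list \<Rightarrow> nat \<Rightarrow> nat \<Rightarrow> nat" where
  "part_rev [] s i = i"
| "part_rev (a # xs) s i =
     (if s < i \<and> i \<le> s + a then s + a + 1 - (i - s) else part_rev xs (s + a) i)"

definition comp_bij :: "nat list \<Rightarrow> nat \<Rightarrow> nat" where
  "comp_bij xs i = part_rev xs 0 i"

definition meander_perm :: "nat list \<Rightarrow> nat list \<Rightarrow> nat \<Rightarrow> nat" where
  "meander_perm xs ys = comp_bij xs \<circ> comp_bij ys"

end

theory Submission
  imports Defs
begin

text \<open>For a composition \<open>(a, b)\<close> of \<open>n\<close>, the bijection \<open>i \<mapsto> a + 1 - i\<close> on the first
  part and \<open>i \<mapsto> n + a + 1 - i\<close> on the second agree modulo \<open>n\<close>: the arc bijection is the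
  reflection \<open>i \<mapsto> a + 1 - i\<close> of \<open>\<int>/n\<close>. The meander permutation is a product of two such
  reflections, hence the rotation \<open>i \<mapsto> i + a - c\<close>.\<close>

lemma comp_bij_two_parts:
  "comp_bij [a, b] i = (if 0 < i \<and> i \<le> a then a + 1 - i
     else if a < i \<and> i \<le> a + b then a + b + 1 - (i - a) else i)"
  by (simp add: comp_bij_def)

lemma comp_bij_two_parts_reflection:
  fixes a b n i :: nat
  assumes "a + b = n" and "i \<in> {1..n}"
  shows "comp_bij [a, b] i \<in> {1..n}
         \<and> [int (comp_bij [a, b] i) = int a + 1 - int i] (mod int n)"
proof (cases "i \<le> a")
  case True
  then have val: "comp_bij [a, b] i = a + 1 - i"
    using assms by (simp add: comp_bij_two_parts)
  have "int (comp_bij [a, b] i) = int a + 1 - int i"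
    using True unfolding val by simp
  then have "[int (comp_bij [a, b] i) = int a + 1 - int i] (mod int n)"
    by simp
  with True assms val show ?thesis by auto
next
  case False
  then have val: "comp_bij [a, b] i = a + b + 1 - (i - a)"
    using assms by (simp add: comp_bij_two_parts)
  have "int (comp_bij [a, b] i) = (int a + 1 - int i) + int n"
    using False assms unfolding val by simp
  then have "[int (comp_bij [a, b] i) = int a + 1 - int i] (mod int n)"
    by (simp add: cong_def)
  with False assms val show ?thesis by auto
qed

theorem lemma4p8:
  fixes a b c d n :: nat
  assumes "a + b = n" and "c + d = n" and "n \<ge> 1"
  shows "\<forall>i \<in> {1..n}. meander_perm [a, b] [c, d] i \<in> {1..n}
          \<and> [int (meander_perm [a, b] [c, d] i) = int i + int a - int c] (mod int n)"
proof
  fix i assume i: "i \<in> {1..n}"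
  define j where "j = comp_bij [c, d] i"
  have j: "j \<in> {1..n}" "[int j = int c + 1 - int i] (mod int n)"
    using comp_bij_two_parts_reflection[OF assms(2) i] by (simp_all add: j_def)
  have m: "meander_perm [a, b] [c, d] i \<in> {1..n}"
      "[int (meander_perm [a, b] [c, d] i) = int a + 1 - int j] (mod int n)"
    using comp_bij_two_parts_reflection[OF assms(1) j(1)]
    by (simp_all add: meander_perm_def j_def)
  have "[int a + 1 - int j = int a + 1 - (int c + 1 - int i)] (mod int n)"
    using j(2) by (intro cong_diff cong_refl)
  from cong_trans[OF m(2) this]
  have "[int (meander_perm [a, b] [c, d] i) = int i + int a - int c] (mod int n)"
    by (simp add: algebra_simps)
  with m(1) show "meander_perm [a, b] [c, d] i \<in> {1..n}
          \<and> [int (meander_perm [a, b] [c, d] i) = int i + int a - int c] (mod int n)"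
    by blast
qed

end
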